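(* Let $X$ be a connected weighted bipartite graph with vertex $u$ such that $0\in\Phi_{\mathbf e_u}$ and $(E_0)_{u,u}<\frac12$. If one of the following holds, then $u$ is not sedentary: (1) $|\Phi_{\mathbf e_u}\cap\mathbb R^+|=1$; (2) $|\Phi_{\mathbf e_u}\cap\mathbb R^+|\ge2$ and either (i) $\Phi_{\mathbf e_u}\cap\mathbb R^+$ consists of integers all having the same exponent of $2$ in their prime factorizations, or (ii) $\Phi_{\mathbf e_u}\cap\mathbb R^+$ is linearly independent over $\mathbb Q$.
   Context: Graphs are simple, connected, undirected, with nonzero real edge weights; $A=A(X)=\sum_\lambda\lambda E_\lambda$ is the spectral decomposition of the weighted adjacency matrix over its distinct eigenvalues, $E_\lambda$ the orthogonal projection onto the $\lambda$-eigenspace; $\Phi_{\mathbf e_u}=\{\lambda:E_\lambda\mathbf e_u\ne0\}$. With $U(t)=e^{itA}$, $u$ is not sedentary if $\inf_{t>0}|U(t)_{u,u}|=0$. *)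

theory Defs
  imports "HOL-Analysis.Analysis" "HOL-Computational_Algebra.Factorial_Ring"
begin

(* A weighted simple undirected graph on the finite vertex type 'n, given by
   its weighted adjacency matrix: symmetric, zero diagonal; edges = nonzero entries. *)
definition weighted_graph :: "real^'n^'n \<Rightarrow> bool" where
  "weighted_graph A \<longleftrightarrow> (\<forall>i j. A $ i $ j = A $ j $ i) \<and> (\<forall>i. A $ i $ i = 0)"

definition graph_connected :: "real^'n^'n \<Rightarrow> bool" where
  "graph_connected A \<longleftrightarrow> (\<forall>i j. (\<lambda>x y. A $ x $ y \<noteq> 0)\<^sup>*\<^sup>* i j)"

definition graph_bipartite :: "real^'n^'n \<Rightarrow> bool" where
  "graph_bipartite A \<longleftrightarrow> (\<exists>S. \<forall>i j. A $ i $ j \<noteq> 0 \<longrightarrow> (i \<in> S \<longleftrightarrow> j \<notin> S))"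

definition eigenspace :: "real^'n^'n \<Rightarrow> real \<Rightarrow> (real^'n) set" where
  "eigenspace A \<mu> = {v. A *v v = \<mu> *\<^sub>R v}"

(* E_lambda: the orthogonal projection onto the lambda-eigenspace (the zero matrix
   if lambda is not an eigenvalue) *)
definition eproj :: "real^'n^'n \<Rightarrow> real \<Rightarrow> real^'n^'n" where
  "eproj A \<mu> = matrix (\<lambda>x. THE y. y \<in> eigenspace A \<mu> \<and>
      (\<forall>z\<in>eigenspace A \<mu>. inner (x - y) z = 0))"

definition eig_support :: "real^'n^'n \<Rightarrow> 'n \<Rightarrow> real set" where
  "eig_support A u = {\<mu>. eproj A \<mu> *v axis u 1 \<noteq> 0}"

primrec mpow :: "real^'n^'n \<Rightarrow> nat \<Rightarrow> real^'n^'n" where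
  "mpow A 0 = mat 1"
| "mpow A (Suc k) = A ** mpow A k"

(* U(t)_{u,v} = (e^{itA})_{u,v}, via the exponential series *)
definition transition :: "real^'n^'n \<Rightarrow> real \<Rightarrow> 'n \<Rightarrow> 'n \<Rightarrow> complex" where
  "transition A t u v = (\<Sum>k. (\<i> * complex_of_real t) ^ k / fact k * complex_of_real (mpow A k $ u $ v))"

definition sedentary :: "real^'n^'n \<Rightarrow> 'n \<Rightarrow> bool" where
  "sedentary A u \<longleftrightarrow> \<not> ((INF t\<in>{0<..}. cmod (transition A t u u)) = 0)"

end

theory Submission
  imports Defs
begin

(* Bipartiteness makes the spectrum symmetric, with (E_(-mu))_uu = (E_mu)_uu, so
   U(t)_uu = sum_mu (E_mu)_uu cos (t mu) is real; it equals 1 at t = 0.  If at some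
   time T every positive mu in Phi_(e_u) has cos (T mu) <= -1 + delta, then, the weights
   (E_mu)_uu summing to 1, U(T)_uu <= 2 (E_0)_uu - 1 + delta, which is negative for small
   delta because (E_0)_uu < 1/2.  Hence U(t)_uu vanishes somewhere in (0, T).  Such T
   exist even with delta = 0 in cases (1) and (2i) (T = pi/mu, resp. T = pi/2^m), and
   for every delta > 0 in case (2ii) by Kronecker's simultaneous approximation theorem. *)

section \<open>Orthogonal projections\<close>

definition orth_proj :: "'a::euclidean_space set \<Rightarrow> 'a \<Rightarrow> 'a" where
  "orth_proj S x = (THE y. y \<in> S \<and> (\<forall>z\<in>S. inner (x - y) z = 0))"

lemma orth_proj_ex1:
  fixes S :: "'a::euclidean_space set"
  assumes "subspace S"
  shows "\<exists>!y. y \<in> S \<and> (\<forall>z\<in>S. inner (x - y) z = 0)"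
proof -
  have span: "span S = S" using assms by (simp add: span_eq_iff)
  obtain y z where "y \<in> S" "\<And>w. w \<in> S \<Longrightarrow> orthogonal z w" "x = y + z"
    using orthogonal_subspace_decomp_exists[of S x] unfolding span by metis
  then have y: "y \<in> S \<and> (\<forall>w\<in>S. inner (x - y) w = 0)"
    by (simp add: orthogonal_def)
  show ?thesis
  proof (rule ex1I)
    show "y \<in> S \<and> (\<forall>w\<in>S. inner (x - y) w = 0)" by (rule y)
  next
    fix y' assume y': "y' \<in> S \<and> (\<forall>w\<in>S. inner (x - y') w = 0)"
    then have "y' - y \<in> S" using y assms by (simp add: subspace_diff)
    then have "inner (x - y) (y' - y) - inner (x - y') (y' - y) = 0" using y y' by simp
    then have "inner (y' - y) (y' - y) = 0" by (simp add: inner_diff_left inner_diff_right)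
    then show "y' = y" by simp
  qed
qed

lemma
  fixes S :: "'a::euclidean_space set"
  assumes "subspace S"
  shows orth_proj_in: "orth_proj S x \<in> S"
    and orth_proj_orthogonal: "z \<in> S \<Longrightarrow> inner (x - orth_proj S x) z = 0"
  using theI'[OF orth_proj_ex1[OF assms, of x]] unfolding orth_proj_def by blast+

lemma orth_proj_unique:
  fixes S :: "'a::euclidean_space set"
  assumes "subspace S" "y \<in> S" "\<And>z. z \<in> S \<Longrightarrow> inner (x - y) z = 0"
  shows "orth_proj S x = y"
  using orth_proj_ex1[OF assms(1), of x] orth_proj_in[OF assms(1)]
    orth_proj_orthogonal[OF assms(1)] assms(2,3)
  by blast

lemma linear_orth_proj:
  fixes S :: "'a::euclidean_space set"
  assumes S: "subspace S"
  shows "linear (orth_proj S)"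
proof (rule linearI)
  fix x y
  show "orth_proj S (x + y) = orth_proj S x + orth_proj S y"
  proof (rule orth_proj_unique[OF S])
    show "orth_proj S x + orth_proj S y \<in> S" by (simp add: S orth_proj_in subspace_add)
    fix z assume "z \<in> S"
    have "inner (x + y - (orth_proj S x + orth_proj S y)) z
        = inner (x - orth_proj S x) z + inner (y - orth_proj S y) z"
      by (simp add: inner_diff_left inner_add_left)
    then show "inner (x + y - (orth_proj S x + orth_proj S y)) z = 0"
      using orth_proj_orthogonal[OF S \<open>z \<in> S\<close>] by simp
  qed
next
  fix c :: real and x
  show "orth_proj S (c *\<^sub>R x) = c *\<^sub>R orth_proj S x"
  proof (rule orth_proj_unique[OF S])
    show "c *\<^sub>R orth_proj S x \<in> S" by (simp add: S orth_proj_in subspace_scale)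
    fix z assume "z \<in> S"
    have "inner (c *\<^sub>R x - c *\<^sub>R orth_proj S x) z = c * inner (x - orth_proj S x) z"
      by (simp add: inner_diff_left right_diff_distrib)
    then show "inner (c *\<^sub>R x - c *\<^sub>R orth_proj S x) z = 0"
      using orth_proj_orthogonal[OF S \<open>z \<in> S\<close>] by simp
  qed
qed

lemma inner_orth_proj_self:
  fixes S :: "'a::euclidean_space set"
  assumes "subspace S"
  shows "inner x (orth_proj S x) = (norm (orth_proj S x))\<^sup>2"
  using orth_proj_orthogonal[OF assms orth_proj_in[OF assms], of x]
  by (simp add: inner_diff_left power2_norm_eq_inner)

lemma orth_proj_isometric_image:
  fixes S :: "'a::euclidean_space set" and g :: "'a \<Rightarrow> 'a"
  assumes S: "subspace S" and g: "linear g" "\<And>a b. inner (g a) (g b) = inner a b"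
  shows "orth_proj (g ` S) (g x) = g (orth_proj S x)"
proof (rule orth_proj_unique)
  show "subspace (g ` S)" by (rule linear_subspace_image[OF g(1) S])
  show "g (orth_proj S x) \<in> g ` S" using orth_proj_in[OF S] by blast
  fix z assume "z \<in> g ` S"
  then obtain w where "w \<in> S" "z = g w" by blast
  then show "inner (g x - g (orth_proj S x)) z = 0"
    using orth_proj_orthogonal[OF S] by (simp flip: linear_diff[OF g(1)] add: g(2))
qed

section \<open>Spectral decomposition of symmetric matrices\<close>

lemma inner_mult_vector_symmetric:
  fixes A :: "real^'n^'n"
  assumes "transpose A = A"
  shows "inner (A *v x) y = inner x (A *v y)"
  by (metis assms dot_lmul_matrix transpose_matrix_vector)

lemma subspace_eigenspace: "subspace (eigenspace A \<mu>)"
  unfolding subspace_def eigenspace_def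
  by (simp add: matrix_vector_right_distrib matrix_vector_mult_scaleR scaleR_right_distrib)

lemma orthogonal_eigenspaces:
  fixes A :: "real^'n^'n"
  assumes "transpose A = A" "v \<in> eigenspace A \<mu>" "w \<in> eigenspace A \<nu>" "\<mu> \<noteq> \<nu>"
  shows "inner v w = 0"
proof -
  have "\<mu> * inner v w = \<nu> * inner v w"
    using inner_mult_vector_symmetric[OF assms(1), of v w] assms(2,3)
    by (simp add: eigenspace_def)
  then show ?thesis using assms(4) by simp
qed

lemma eq_0_if_quadratic_nonpos:
  fixes b c :: real
  assumes "\<And>s. s * b + s\<^sup>2 * c \<le> 0"
  shows "b = 0"
proof -
  define d where "d = \<bar>c\<bar> + 1"
  have d: "d > 0" "d + c \<ge> 1" unfolding d_def by auto
  have "(b / d) * b + (b / d)\<^sup>2 * c = b\<^sup>2 * (d + c) / d\<^sup>2"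
    using d by (simp add: field_simps power2_eq_square)
  then have "b\<^sup>2 * (d + c) \<le> 0"
    using assms[of "b / d"] d by (simp add: divide_le_0_iff)
  moreover have "b\<^sup>2 \<le> b\<^sup>2 * (d + c)"
    using mult_left_mono[OF d(2), of "b\<^sup>2"] by simp
  ultimately have "b\<^sup>2 \<le> 0" by linarith
  then show ?thesis by simp
qed

lemma rayleigh_quotient_attains_max:
  fixes A :: "real^'n^'n"
  assumes W: "subspace W" and "W \<noteq> {0}"
  obtains x0 where "x0 \<in> W" "norm x0 = 1"
    "\<And>x. x \<in> W \<Longrightarrow> inner x (A *v x) \<le> inner x0 (A *v x0) * inner x x"
proof -
  define q where "q x = inner x (A *v x)" for x
  obtain w where "w \<in> W" "w \<noteq> 0" using assms(2) subspace_0[OF W] by blast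
  then have "(1 / norm w) *\<^sub>R w \<in> W \<inter> sphere 0 1" using W by (simp add: subspace_scale)
  moreover have "compact (W \<inter> sphere 0 1)"
    using closed_subspace[OF W] by (intro closed_Int_compact) auto
  moreover have "continuous_on (W \<inter> sphere 0 1) q" unfolding q_def
    by (intro continuous_on_inner continuous_on_id linear_continuous_on
        matrix_vector_mul_bounded_linear)
  ultimately obtain x0 where x0: "x0 \<in> W" "norm x0 = 1"
    and max: "\<And>y. y \<in> W \<Longrightarrow> norm y = 1 \<Longrightarrow> q y \<le> q x0"
    using continuous_attains_sup[of "W \<inter> sphere 0 1" q] by fastforce
  have "q x \<le> q x0 * inner x x" if "x \<in> W" for x
  proof (cases "x = 0")
    case False
    have "q ((1 / norm x) *\<^sub>R x) \<le> q x0"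
      using max[of "(1 / norm x) *\<^sub>R x"] that False W by (simp add: subspace_scale)
    then show ?thesis using False
      by (simp add: q_def matrix_vector_mult_scaleR field_simps power2_eq_square
          flip: power2_norm_eq_inner)
  qed (simp add: q_def)
  then show thesis by (intro that[OF x0]) (simp add: q_def)
qed

text \<open>At a maximiser \<open>x0\<close> of the Rayleigh quotient, perturbing in the direction
  \<open>A x0 - l x0 \<in> W\<close> shows that this direction vanishes.\<close>

lemma symmetric_invariant_subspace_has_eigenvector:
  fixes A :: "real^'n^'n"
  assumes sym: "transpose A = A" and W: "subspace W" and inv: "\<And>x. x \<in> W \<Longrightarrow> A *v x \<in> W"
    and "W \<noteq> {0}"
  obtains x l where "x \<in> W" "x \<noteq> 0" "A *v x = l *\<^sub>R x"
proof -
  define q where "q x = inner x (A *v x)" for x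
  obtain x0 where x0: "x0 \<in> W" "norm x0 = 1"
    and rayleigh: "\<And>x. x \<in> W \<Longrightarrow> inner x (A *v x) \<le> inner x0 (A *v x0) * inner x x"
    using rayleigh_quotient_attains_max[OF W \<open>W \<noteq> {0}\<close>, where A = A] by metis
  define l where "l = q x0"
  define y where "y = A *v x0 - l *\<^sub>R x0"
  have y: "y \<in> W" unfolding y_def using inv x0(1) W by (simp add: subspace_diff subspace_scale)
  have x0x0: "inner x0 x0 = 1" using x0(2) by (simp add: power2_norm_eq_inner[symmetric])
  have yAx0: "inner y (A *v x0) = inner y y + l * inner y x0"
    unfolding y_def by (simp add: inner_diff_right)
  have "s * (2 * inner y y) + s\<^sup>2 * (q y - l * inner y y) \<le> 0" for s
  proof -
    have "x0 + s *\<^sub>R y \<in> W" using x0(1) y W by (simp add: subspace_add subspace_scale)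
    then have ray: "q (x0 + s *\<^sub>R y) \<le> l * inner (x0 + s *\<^sub>R y) (x0 + s *\<^sub>R y)"
      unfolding l_def q_def by (rule rayleigh)
    have expand_q: "q (x0 + s *\<^sub>R y) = l + 2 * s * inner y (A *v x0) + s\<^sup>2 * q y"
    proof -
      have "inner x0 (A *v y) = inner y (A *v x0)"
        using inner_mult_vector_symmetric[OF sym, of y x0] by (simp add: inner_commute)
      then show ?thesis unfolding q_def l_def
        by (simp add: matrix_vector_right_distrib matrix_vector_mult_scaleR inner_add_left
            inner_add_right power2_eq_square algebra_simps)
    qed
    have expand_norm: "inner (x0 + s *\<^sub>R y) (x0 + s *\<^sub>R y) = 1 + 2 * s * inner y x0 + s\<^sup>2 * inner y y"
      using x0x0 by (simp add: inner_add_left inner_add_right inner_commute[of x0 y] power2_eq_square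
          algebra_simps)
    show ?thesis using ray unfolding expand_q expand_norm yAx0 by (simp add: algebra_simps)
  qed
  then have "2 * inner y y = 0" by (rule eq_0_if_quadratic_nonpos)
  then have "A *v x0 = l *\<^sub>R x0" unfolding y_def by simp
  moreover have "x0 \<noteq> 0" using x0(2) by auto
  ultimately show thesis using x0(1) that by blast
qed

definition eigenvalues :: "real^'n^'n \<Rightarrow> real set" where
  "eigenvalues A = {\<mu>. eigenspace A \<mu> \<noteq> {0}}"

lemma eigenvalues_iff: "\<mu> \<in> eigenvalues A \<longleftrightarrow> (\<exists>v. v \<noteq> 0 \<and> A *v v = \<mu> *\<^sub>R v)"
  unfolding eigenvalues_def eigenspace_def by auto

lemma finite_eigenvalues:
  fixes A :: "real^'n^'n"
  assumes sym: "transpose A = A"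
  shows "finite (eigenvalues A)"
proof -
  obtain v where "\<And>\<mu>. \<mu> \<in> eigenvalues A \<Longrightarrow> v \<mu> \<noteq> 0 \<and> A *v v \<mu> = \<mu> *\<^sub>R v \<mu>"
    using eigenvalues_iff by metis
  then have v: "\<And>\<mu>. \<mu> \<in> eigenvalues A \<Longrightarrow> v \<mu> \<noteq> 0 \<and> v \<mu> \<in> eigenspace A \<mu>"
    by (simp add: eigenspace_def)
  have orth: "inner (v \<mu>) (v \<nu>) = 0" if "\<mu> \<in> eigenvalues A" "\<nu> \<in> eigenvalues A" "\<mu> \<noteq> \<nu>" for \<mu> \<nu>
    using orthogonal_eigenspaces[OF sym] v that by blast
  have "pairwise orthogonal (v ` eigenvalues A)"
    unfolding pairwise_def orthogonal_def using orth by fastforce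
  moreover have "0 \<notin> v ` eigenvalues A" using v by fastforce
  ultimately have "finite (v ` eigenvalues A)"
    using independent_imp_finite pairwise_orthogonal_independent by blast
  moreover have "inj_on v (eigenvalues A)"
    using orth v by (metis inj_onI inner_eq_zero_iff)
  ultimately show ?thesis by (simp add: finite_image_iff)
qed

lemma orth_proj_eigenspace_eq_0:
  assumes "\<mu> \<notin> eigenvalues A"
  shows "orth_proj (eigenspace A \<mu>) x = 0"
  using orth_proj_in[OF subspace_eigenspace, of A \<mu> x] assms unfolding eigenvalues_def by auto

text \<open>The residual is orthogonal to every eigenvector and lies in an \<open>A\<close>-invariant
  subspace, which therefore contains no eigenvector and must be trivial.\<close>

lemma sum_orth_proj_eigenspaces:
  fixes A :: "real^'n^'n"
  assumes sym: "transpose A = A"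
  shows "(\<Sum>\<mu>\<in>eigenvalues A. orth_proj (eigenspace A \<mu>) x) = x"
proof -
  define r where "r = x - (\<Sum>\<mu>\<in>eigenvalues A. orth_proj (eigenspace A \<mu>) x)"
  define W where "W = {w. \<forall>\<nu>. \<forall>v\<in>eigenspace A \<nu>. inner w v = 0}"
  have "inner r v = 0" if v: "v \<in> eigenspace A \<nu>" for v \<nu>
  proof (cases "\<nu> \<in> eigenvalues A")
    case True
    have "\<forall>\<mu>\<in>eigenvalues A - {\<nu>}. inner (orth_proj (eigenspace A \<mu>) x) v = 0"
      using orthogonal_eigenspaces[OF sym orth_proj_in[OF subspace_eigenspace] v] by blast
    then have "inner (\<Sum>\<mu>\<in>eigenvalues A. orth_proj (eigenspace A \<mu>) x) v
        = inner (orth_proj (eigenspace A \<nu>) x) v"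
      unfolding inner_sum_left by (simp add: sum.remove[OF finite_eigenvalues[OF sym] True])
    then show ?thesis
      using orth_proj_orthogonal[OF subspace_eigenspace v, of x]
      unfolding r_def by (simp add: inner_diff_left)
  next
    case False
    then show ?thesis using v unfolding eigenvalues_def by auto
  qed
  then have "r \<in> W" unfolding W_def by blast
  have W: "subspace W" unfolding W_def subspace_def by (auto simp: inner_add_left)
  have inv: "A *v w \<in> W" if "w \<in> W" for w
    using that unfolding W_def eigenspace_def by (auto simp: inner_mult_vector_symmetric[OF sym])
  have "W = {0}"
  proof (rule ccontr)
    assume "W \<noteq> {0}"
    obtain w l where "w \<in> W" "w \<noteq> 0" "A *v w = l *\<^sub>R w"
      by (rule symmetric_invariant_subspace_has_eigenvector[OF sym W inv \<open>W \<noteq> {0}\<close>])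
    have "w \<in> eigenspace A l" using \<open>A *v w = l *\<^sub>R w\<close> by (simp add: eigenspace_def)
    moreover have "\<forall>\<nu>. \<forall>v\<in>eigenspace A \<nu>. inner w v = 0" using \<open>w \<in> W\<close> unfolding W_def by simp
    ultimately have "inner w w = 0" by blast
    with \<open>w \<noteq> 0\<close> show False by simp
  qed
  then show ?thesis using \<open>r \<in> W\<close> unfolding r_def by simp
qed

lemma mpow_mult_vector_spectral:
  fixes A :: "real^'n^'n"
  assumes sym: "transpose A = A"
  shows "mpow A k *v x = (\<Sum>\<mu>\<in>eigenvalues A. \<mu> ^ k *\<^sub>R orth_proj (eigenspace A \<mu>) x)"
proof (induction k)
  case 0
  then show ?case using sum_orth_proj_eigenspaces[OF sym] by simp
next
  case (Suc k)
  have "A *v orth_proj (eigenspace A \<mu>) x = \<mu> *\<^sub>R orth_proj (eigenspace A \<mu>) x" for \<mu>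
    using orth_proj_in[OF subspace_eigenspace, of A \<mu> x] by (simp add: eigenspace_def)
  then show ?case
    by (simp add: Suc flip: matrix_vector_mul_assoc
        add: linear_sum[OF matrix_vector_mul_linear] matrix_vector_mult_scaleR power_Suc2
        del: power_Suc)
qed

section \<open>Spectral form of the return amplitude\<close>

lemma eproj_mult_vector: "eproj A \<mu> *v x = orth_proj (eigenspace A \<mu>) x"
proof -
  have "eproj A \<mu> = matrix (orth_proj (eigenspace A \<mu>))"
    unfolding eproj_def orth_proj_def ..
  then show ?thesis
    using matrix_vector_mul(2)[OF linear_orth_proj[OF subspace_eigenspace]] by metis
qed

lemma eproj_diag: "eproj A \<mu> $ u $ u = (norm (orth_proj (eigenspace A \<mu>) (axis u 1)))\<^sup>2"
proof -
  have "eproj A \<mu> $ u $ u = inner (axis u 1) (eproj A \<mu> *v axis u 1)"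
    by (simp add: inner_axis' matrix_vector_mult_basis column_def)
  then show ?thesis
    by (simp add: eproj_mult_vector inner_orth_proj_self[OF subspace_eigenspace])
qed

lemma eproj_diag_nonneg: "eproj A \<mu> $ u $ u \<ge> 0"
  by (simp add: eproj_diag)

lemma orth_proj_axis_component: "orth_proj (eigenspace A \<mu>) (axis u 1) $ u = eproj A \<mu> $ u $ u"
  by (simp add: matrix_vector_mult_basis column_def flip: eproj_mult_vector)

lemma eig_support_iff_eproj_diag: "\<mu> \<in> eig_support A u \<longleftrightarrow> eproj A \<mu> $ u $ u \<noteq> 0"
  by (simp add: eig_support_def eproj_diag eproj_mult_vector)

lemma eig_support_subset_eigenvalues: "eig_support A u \<subseteq> eigenvalues A"
  using orth_proj_eigenspace_eq_0 by (auto simp: eig_support_def eproj_mult_vector)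

lemma finite_eig_support:
  fixes A :: "real^'n^'n"
  assumes "transpose A = A"
  shows "finite (eig_support A u)"
  using finite_eigenvalues[OF assms] eig_support_subset_eigenvalues by (rule finite_subset[rotated])

lemma mpow_diag_spectral:
  fixes A :: "real^'n^'n"
  assumes sym: "transpose A = A"
  shows "mpow A k $ u $ u = (\<Sum>\<mu>\<in>eig_support A u. \<mu> ^ k * eproj A \<mu> $ u $ u)"
proof -
  have "mpow A k $ u $ u = (mpow A k *v axis u 1) $ u"
    by (simp add: matrix_vector_mult_basis column_def)
  also have "\<dots> = (\<Sum>\<mu>\<in>eigenvalues A. \<mu> ^ k * eproj A \<mu> $ u $ u)"
    by (simp add: mpow_mult_vector_spectral[OF sym] orth_proj_axis_component)
  also have "\<dots> = (\<Sum>\<mu>\<in>eig_support A u. \<mu> ^ k * eproj A \<mu> $ u $ u)"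
    using finite_eigenvalues[OF sym] eig_support_subset_eigenvalues
    by (intro sum.mono_neutral_right) (auto simp: eig_support_iff_eproj_diag)
  finally show ?thesis .
qed

lemma sum_eproj_diag:
  fixes A :: "real^'n^'n"
  assumes "transpose A = A"
  shows "(\<Sum>\<mu>\<in>eig_support A u. eproj A \<mu> $ u $ u) = 1"
  using mpow_diag_spectral[OF assms, of 0 u] by (simp add: mat_def)

lemma transition_diag_spectral:
  fixes A :: "real^'n^'n"
  assumes sym: "transpose A = A"
  shows "transition A t u u
    = (\<Sum>\<mu>\<in>eig_support A u. of_real (eproj A \<mu> $ u $ u) * exp (\<i> * of_real (t * \<mu>)))"
proof -
  let ?p = "\<lambda>\<mu>. complex_of_real (eproj A \<mu> $ u $ u)"
  have "(\<lambda>k. \<Sum>\<mu>\<in>eig_support A u. ?p \<mu> * ((\<i> * of_real (t * \<mu>)) ^ k /\<^sub>R fact k))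
      sums (\<Sum>\<mu>\<in>eig_support A u. ?p \<mu> * exp (\<i> * of_real (t * \<mu>)))"
    by (intro sums_sum sums_mult exp_converges)
  moreover have "(\<Sum>\<mu>\<in>eig_support A u. ?p \<mu> * ((\<i> * of_real (t * \<mu>)) ^ k /\<^sub>R fact k))
      = (\<i> * of_real t) ^ k / fact k * of_real (mpow A k $ u $ u)" for k
    by (simp add: mpow_diag_spectral[OF sym] sum_distrib_left power_mult_distrib
        scaleR_conv_of_real divide_inverse mult_ac)
  ultimately show ?thesis unfolding transition_def by (simp add: sums_iff)
qed

section \<open>Bipartite graphs\<close>

definition sign_flip :: "'n set \<Rightarrow> real^'n \<Rightarrow> real^'n" where
  "sign_flip S v = (\<chi> i. (if i \<in> S then 1 else -1) * v $ i)"

lemma sign_flip_sign_flip [simp]: "sign_flip S (sign_flip S v) = v"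
  by (simp add: sign_flip_def vec_eq_iff)

lemma linear_sign_flip: "linear (sign_flip S)"
  by (rule linearI) (simp_all add: sign_flip_def vec_eq_iff distrib_left)

lemma inner_sign_flip [simp]: "inner (sign_flip S a) (sign_flip S b) = inner a b"
  unfolding sign_flip_def inner_vec_def by (rule sum.cong) auto

lemma norm_sign_flip [simp]: "norm (sign_flip S v) = norm v"
  by (simp add: norm_eq_sqrt_inner)

lemma sign_flip_axis: "sign_flip S (axis u 1) = (if u \<in> S then 1 else -1) *\<^sub>R axis u 1"
  by (simp add: sign_flip_def vec_eq_iff axis_def)

lemma matrix_vector_mult_sign_flip:
  fixes A :: "real^'n^'n"
  assumes bip: "\<And>i j. A $ i $ j \<noteq> 0 \<Longrightarrow> (i \<in> S \<longleftrightarrow> j \<notin> S)"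
  shows "A *v sign_flip S v = - sign_flip S (A *v v)"
proof -
  have "A $ i $ j * (if j \<in> S then 1 else -1) = - (if i \<in> S then 1 else -1) * A $ i $ j" for i j
    using bip[of i j] by (cases "A $ i $ j = 0") auto
  then show ?thesis
    by (simp add: sign_flip_def matrix_vector_mult_def vec_eq_iff sum_distrib_left
        sum_negf mult.assoc[symmetric])
qed

lemma eigenspace_uminus_bipartite:
  fixes A :: "real^'n^'n"
  assumes bip: "\<And>i j. A $ i $ j \<noteq> 0 \<Longrightarrow> (i \<in> S \<longleftrightarrow> j \<notin> S)"
  shows "eigenspace A (- \<mu>) = sign_flip S ` eigenspace A \<mu>"
proof -
  have flip: "sign_flip S v \<in> eigenspace A (- \<nu>)" if "v \<in> eigenspace A \<nu>" for v \<nu>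
    using that matrix_vector_mult_sign_flip[OF bip, where v = v]
    by (simp add: eigenspace_def sign_flip_def vec_eq_iff)
  show ?thesis
  proof
    show "eigenspace A (- \<mu>) \<subseteq> sign_flip S ` eigenspace A \<mu>"
    proof
      fix v assume "v \<in> eigenspace A (- \<mu>)"
      then have "sign_flip S v \<in> eigenspace A \<mu>" using flip[of v "- \<mu>"] by simp
      then show "v \<in> sign_flip S ` eigenspace A \<mu>" by (rule image_eqI[rotated]) simp
    qed
  qed (use flip in blast)
qed

lemma eproj_diag_uminus:
  fixes A :: "real^'n^'n"
  assumes "graph_bipartite A"
  shows "eproj A (- \<mu>) $ u $ u = eproj A \<mu> $ u $ u"
proof -
  obtain S where bip: "\<And>i j. A $ i $ j \<noteq> 0 \<Longrightarrow> (i \<in> S \<longleftrightarrow> j \<notin> S)"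
    using assms unfolding graph_bipartite_def by blast
  let ?P = "orth_proj (eigenspace A \<mu>)"
  have "orth_proj (eigenspace A (- \<mu>)) (axis u 1)
      = orth_proj (sign_flip S ` eigenspace A \<mu>) (sign_flip S (sign_flip S (axis u 1)))"
    by (simp add: eigenspace_uminus_bipartite[OF bip])
  also have "\<dots> = sign_flip S (?P (sign_flip S (axis u 1)))"
    by (rule orth_proj_isometric_image[OF subspace_eigenspace linear_sign_flip inner_sign_flip])
  also have "\<dots> = sign_flip S ((if u \<in> S then 1 else -1) *\<^sub>R ?P (axis u 1))"
    by (simp add: sign_flip_axis linear_cmul[OF linear_orth_proj[OF subspace_eigenspace]])
  finally show ?thesis by (simp add: eproj_diag)
qed

lemma image_uminus_eig_support:
  fixes A :: "real^'n^'n"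
  assumes "graph_bipartite A"
  shows "uminus ` eig_support A u = eig_support A u"
proof -
  have "- \<mu> \<in> eig_support A u \<longleftrightarrow> \<mu> \<in> eig_support A u" for \<mu>
    by (simp add: eig_support_iff_eproj_diag eproj_diag_uminus[OF assms])
  then show ?thesis by (auto intro: image_eqI[of _ uminus, OF minus_minus[symmetric]])
qed

lemma sum_odd_eq_0:
  fixes f :: "real \<Rightarrow> real"
  assumes "uminus ` F = F" and "\<And>x. x \<in> F \<Longrightarrow> f (- x) = - f x"
  shows "sum f F = 0"
proof -
  have "sum f F = sum (f \<circ> uminus) F"
    by (subst (1) assms(1)[symmetric]) (simp add: sum.reindex)
  also have "\<dots> = - sum f F" using assms(2) by (simp add: sum_negf)
  finally show ?thesis by simp
qed

lemma transition_diag_bipartite: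
  fixes A :: "real^'n^'n"
  assumes sym: "transpose A = A" and bip: "graph_bipartite A"
  shows "transition A t u u = of_real (\<Sum>\<mu>\<in>eig_support A u. eproj A \<mu> $ u $ u * cos (t * \<mu>))"
proof -
  have "(\<Sum>\<mu>\<in>eig_support A u. eproj A \<mu> $ u $ u * sin (t * \<mu>)) = 0"
    by (rule sum_odd_eq_0[OF image_uminus_eig_support[OF bip]]) (simp add: eproj_diag_uminus[OF bip])
  moreover have cis: "exp (\<i> * complex_of_real x) = cis x" for x
    by (simp add: cis_conv_exp)
  ultimately show ?thesis
    unfolding transition_diag_spectral[OF sym] cis by (simp add: complex_eq_iff Re_sum Im_sum)
qed

section \<open>A criterion for non-sedentariness\<close>

lemma weighted_cos_sum_neg:
  fixes F :: "real set" and p :: "real \<Rightarrow> real"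
  assumes "finite F" "0 \<in> F" "\<And>\<mu>. \<mu> \<in> F \<Longrightarrow> p \<mu> \<ge> 0" "sum p F = 1"
    and cos: "\<And>\<mu>. \<mu> \<in> F - {0} \<Longrightarrow> cos (T * \<mu>) \<le> -1 + \<delta>"
    and "0 \<le> \<delta>" "\<delta> < 1 - 2 * p 0"
  shows "(\<Sum>\<mu>\<in>F. p \<mu> * cos (T * \<mu>)) < 0"
proof -
  have "(\<Sum>\<mu>\<in>F. p \<mu> * cos (T * \<mu>)) = p 0 + (\<Sum>\<mu>\<in>F - {0}. p \<mu> * cos (T * \<mu>))"
    using assms(1,2) by (simp add: sum.remove)
  also have "\<dots> \<le> p 0 + (\<Sum>\<mu>\<in>F - {0}. p \<mu> * (-1 + \<delta>))"
    using cos assms(3) by (intro add_left_mono sum_mono mult_left_mono) auto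
  also have "\<dots> = p 0 + (1 - p 0) * (-1 + \<delta>)"
    using assms(1,2,4) by (simp add: sum_distrib_right[symmetric] sum_diff1)
  also have "\<dots> < 0"
  proof -
    have "0 \<le> p 0 * \<delta>" using assms(2,3,6) by simp
    then show ?thesis using assms(7) by (simp add: algebra_simps)
  qed
  finally show ?thesis .
qed

lemma INF_cmod_eq_0:
  fixes f :: "real \<Rightarrow> complex"
  assumes "x > 0" "f x = 0"
  shows "(INF t\<in>{0<..}. cmod (f t)) = 0"
proof (rule antisym)
  have "bdd_below ((\<lambda>t. cmod (f t)) ` {0<..})" by (rule bdd_belowI2[of _ 0]) simp
  then show "(INF t\<in>{0<..}. cmod (f t)) \<le> 0"
    using cINF_lower[of "\<lambda>t. cmod (f t)" "{0<..}" x] assms by simp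
  show "0 \<le> (INF t\<in>{0<..}. cmod (f t))"
    by (rule cINF_greatest) auto
qed

definition approx_antiphase :: "real set \<Rightarrow> bool" where
  "approx_antiphase F \<longleftrightarrow> (\<forall>\<delta>>0. \<exists>T>0. \<forall>\<mu>\<in>F. cos (T * \<mu>) \<le> -1 + \<delta>)"

lemma not_sedentary_if_approx_antiphase:
  fixes A :: "real^'n^'n"
  assumes sym: "transpose A = A" and bip: "graph_bipartite A"
    and "0 \<in> eig_support A u" and "eproj A 0 $ u $ u < 1/2"
    and "approx_antiphase {\<mu>\<in>eig_support A u. \<mu> > 0}"
  shows "\<not> sedentary A u"
proof -
  define F where "F = eig_support A u"
  define h where "h t = (\<Sum>\<mu>\<in>F. eproj A \<mu> $ u $ u * cos (t * \<mu>))" for t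
  define \<delta> where "\<delta> = (1 - 2 * eproj A 0 $ u $ u) / 2"
  have "\<delta> > 0" using assms(4) by (simp add: \<delta>_def)
  then obtain T where "T > 0" and "\<forall>\<mu>\<in>{\<mu>\<in>F. \<mu> > 0}. cos (T * \<mu>) \<le> -1 + \<delta>"
    using assms(5) unfolding approx_antiphase_def F_def by blast
  then have T: "\<And>\<mu>. \<mu> \<in> F \<Longrightarrow> \<mu> > 0 \<Longrightarrow> cos (T * \<mu>) \<le> -1 + \<delta>" by simp
  have Fsym: "uminus ` F = F" unfolding F_def by (rule image_uminus_eig_support[OF bip])
  have "cos (T * \<mu>) \<le> -1 + \<delta>" if "\<mu> \<in> F - {0}" for \<mu>
  proof (cases "\<mu> > 0")
    case False
    have "- \<mu> \<in> uminus ` F" using that by (intro imageI) simp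
    then have "- \<mu> \<in> F" unfolding Fsym .
    then show ?thesis using T[of "- \<mu>"] False that by simp
  qed (use that T in blast)
  then have "h T < 0" unfolding h_def
  proof (rule weighted_cos_sum_neg[rotated 4])
    show "finite F" unfolding F_def by (rule finite_eig_support[OF sym])
    show "(\<Sum>\<mu>\<in>F. eproj A \<mu> $ u $ u) = 1" unfolding F_def by (rule sum_eproj_diag[OF sym])
  qed (use assms(3) \<open>\<delta> > 0\<close> in \<open>simp_all add: F_def \<delta>_def eproj_diag_nonneg\<close>)
  moreover have "h 0 = 1" using sum_eproj_diag[OF sym] by (simp add: h_def F_def)
  moreover have "continuous_on {0..T} h" unfolding h_def by (intro continuous_intros)
  ultimately obtain x where "0 \<le> x" "x \<le> T" "h x = 0"
    using IVT2'[of h T 0 0] \<open>T > 0\<close> by auto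
  moreover have "transition A t u u = of_real (h t)" for t
    unfolding h_def F_def by (rule transition_diag_bipartite[OF sym bip])
  ultimately have "x > 0" "transition A x u u = 0"
    using \<open>h 0 = 1\<close> by (auto simp: order_le_less)
  then have "(INF t\<in>{0<..}. cmod (transition A t u u)) = 0" by (rule INF_cmod_eq_0)
  then show ?thesis unfolding sedentary_def by simp
qed

section \<open>Simultaneous antiphase of the positive eigenvalues\<close>

lemma approx_antiphaseI:
  assumes "T > 0" "\<And>\<mu>. \<mu> \<in> F \<Longrightarrow> cos (T * \<mu>) = -1"
  shows "approx_antiphase F"
  using assms unfolding approx_antiphase_def by force

lemma approx_antiphase_singleton:
  assumes "\<mu> \<noteq> 0"
  shows "approx_antiphase {\<mu>}"
proof (rule approx_antiphaseI)
  show "pi / \<bar>\<mu>\<bar> > 0" using assms by simp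
  have "\<bar>pi / \<bar>\<mu>\<bar> * \<mu>\<bar> = pi" using assms by (simp add: abs_mult)
  then show "cos (pi / \<bar>\<mu>\<bar> * \<nu>) = -1" if "\<nu> \<in> {\<mu>}" for \<nu>
    using that cos_abs_real[of "pi / \<bar>\<mu>\<bar> * \<mu>"] by simp
qed

lemma approx_antiphase_same_multiplicity_2:
  assumes "0 \<notin> F" and F: "\<forall>\<mu>\<in>F. \<exists>k::int. \<mu> = of_int k \<and> multiplicity 2 k = m"
  shows "approx_antiphase F"
proof (rule approx_antiphaseI)
  show "pi / 2 ^ m > 0" by simp
  fix \<mu> assume "\<mu> \<in> F"
  then obtain k :: int where k: "\<mu> = of_int k" "multiplicity 2 k = m" "k \<noteq> 0"
    using F assms(1) by fastforce
  then obtain y where "k = 2 ^ m * y" "\<not> 2 dvd y"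
    using multiplicity_decompose'[of k 2] by auto
  then have "pi / 2 ^ m * \<mu> = pi * of_int y" using k(1) by simp
  then show "cos (pi / 2 ^ m * \<mu>) = -1" using \<open>\<not> 2 dvd y\<close> by simp
qed

lemma cos_ge_1_minus_sq_half: "cos x \<ge> 1 - x\<^sup>2 / 2" for x :: real
proof -
  have "(sin (x / 2))\<^sup>2 \<le> (x / 2)\<^sup>2"
    using abs_sin_x_le_abs_x[of "x / 2"] by (metis abs_ge_zero power2_abs power_mono)
  then show ?thesis
    using cos_double_sin[of "x / 2"] by (simp add: power_divide)
qed

lemma cos_near_odd_multiple_pi:
  fixes k :: int and e \<delta> :: real
  assumes "\<bar>e\<bar> \<le> 1/4" "\<bar>e\<bar> \<le> \<delta> / 8"
  shows "cos (2 * pi * (of_int k + 1/2 + e)) \<le> -1 + \<delta>"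
proof -
  have "2 * pi * (of_int k + 1/2 + e) = 2 * pi * of_int k + (pi + 2 * pi * e)"
    by (simp add: algebra_simps)
  then have "cos (2 * pi * (of_int k + 1/2 + e)) = - cos (2 * pi * e)"
    by (simp add: cos_add)
  also have "\<dots> \<le> -1 + 2 * pi\<^sup>2 * e\<^sup>2"
    using cos_ge_1_minus_sq_half[of "2 * pi * e"] by (simp add: power_mult_distrib)
  also have "\<dots> \<le> -1 + 32 * e\<^sup>2"
    using pi_less_4 pi_gt_zero power_mono[of pi 4 2] by (simp add: mult_right_mono)
  also have "\<dots> \<le> -1 + \<delta>"
  proof -
    have "e\<^sup>2 \<le> \<bar>e\<bar> * (1/4)"
      using assms(1) mult_left_mono[of "\<bar>e\<bar>" "1/4" "\<bar>e\<bar>"] by (simp add: power2_eq_square)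
    then show ?thesis using assms(2) by simp
  qed
  finally show ?thesis .
qed

lemma int_independent_if_rat_independent:
  fixes F :: "real set"
  assumes "finite F"
    and indep: "\<forall>c. (\<forall>\<mu>\<in>F. c \<mu> \<in> \<rat>) \<longrightarrow> (\<Sum>\<mu>\<in>F. c \<mu> * \<mu>) = 0 \<longrightarrow> (\<forall>\<mu>\<in>F. c \<mu> = 0)"
  shows "module.independent (\<lambda>r. (*) (real_of_int r)) F"
proof -
  interpret Z: Modules.module "\<lambda>r. (*) (real_of_int r)"
    by unfold_locales (simp_all add: distrib_left distrib_right)
  show ?thesis
    unfolding Z.independent_explicit_module
  proof (intro allI impI)
    fix t c v
    assume t: "finite t" "t \<subseteq> F" "(\<Sum>v\<in>t. real_of_int (c v) * v) = 0" "v \<in> t"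
    define c' where "c' \<mu> = (if \<mu> \<in> t then real_of_int (c \<mu>) else 0)" for \<mu>
    have "(\<Sum>\<mu>\<in>F. c' \<mu> * \<mu>) = (\<Sum>\<mu>\<in>t. c' \<mu> * \<mu>)"
      using t(2) assms(1) by (intro sum.mono_neutral_right) (auto simp: c'_def)
    also have "\<dots> = (\<Sum>\<mu>\<in>t. real_of_int (c \<mu>) * \<mu>)" by (simp add: c'_def)
    finally have "(\<Sum>\<mu>\<in>F. c' \<mu> * \<mu>) = 0" using t(3) by simp
    moreover have "\<forall>\<mu>\<in>F. c' \<mu> \<in> \<rat>" by (simp add: c'_def)
    ultimately have "c' v = 0" using indep t(2,4) by blast
    then show "c v = 0" using t(4) by (simp add: c'_def)
  qed
qed

text \<open>Kronecker's theorem puts all \<open>t \<mu>\<close> simultaneously close to \<open>1/2\<close> modulo \<open>1\<close>.\<close>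

lemma approx_antiphase_rat_independent:
  fixes F :: "real set"
  assumes "finite F"
    and "\<forall>c. (\<forall>\<mu>\<in>F. c \<mu> \<in> \<rat>) \<longrightarrow> (\<Sum>\<mu>\<in>F. c \<mu> * \<mu>) = 0 \<longrightarrow> (\<forall>\<mu>\<in>F. c \<mu> = 0)"
  shows "approx_antiphase F"
  unfolding approx_antiphase_def
proof (intro allI impI)
  fix \<delta> :: real assume "\<delta> > 0"
  show "\<exists>T>0. \<forall>\<mu>\<in>F. cos (T * \<mu>) \<le> -1 + \<delta>"
  proof (cases "F = {}")
    case False
    obtain \<theta> and n :: nat where \<theta>: "bij_betw \<theta> {..<n} F"
      using ex_bij_betw_nat_finite[OF assms(1)] unfolding atLeast0LessThan by blast
    then have inj: "inj_on \<theta> {..<n}" and im: "\<theta> ` {..<n} = F" by (simp_all add: bij_betw_def)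
    define \<epsilon> where "\<epsilon> = min (1/4) (\<delta> / 8)"
    have "\<epsilon> > 0" using \<open>\<delta> > 0\<close> by (simp add: \<epsilon>_def)
    obtain t h where th: "\<And>i. i < n \<Longrightarrow> \<bar>t * \<theta> i - of_int (h i) - 1/2\<bar> < \<epsilon>"
      using Kronecker_thm_1[OF _ inj \<open>\<epsilon> > 0\<close>, of "\<lambda>_. 1/2"]
        int_independent_if_rat_independent[OF assms] unfolding im by blast
    have "n > 0"
    proof (rule ccontr)
      assume "\<not> n > 0"
      then have "F = {}" unfolding im[symmetric] by simp
      with False show False ..
    qed
    have "t \<noteq> 0"
    proof
      assume "t = 0"
      then have "\<bar>- of_int (h 0) - 1/2\<bar> < (1/4 :: real)"
        using th[OF \<open>n > 0\<close>] by (simp add: \<epsilon>_def)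
      then have "- 1 < real_of_int (h 0)" "real_of_int (h 0) < 0" by linarith+
      then show False by simp
    qed
    show ?thesis
    proof (intro exI conjI ballI)
      show "2 * pi * \<bar>t\<bar> > 0" using \<open>t \<noteq> 0\<close> by simp
      fix \<mu> assume "\<mu> \<in> F"
      then obtain i where "i \<in> {..<n}" "\<mu> = \<theta> i" unfolding im[symmetric] by blast
      define e where "e = t * \<mu> - of_int (h i) - 1/2"
      have "\<bar>e\<bar> < \<epsilon>" using th \<open>i \<in> {..<n}\<close> by (simp add: e_def \<open>\<mu> = \<theta> i\<close>)
      have "\<bar>2 * pi * \<bar>t\<bar> * \<mu>\<bar> = \<bar>2 * pi * (of_int (h i) + 1/2 + e)\<bar>"
        by (simp add: e_def abs_mult)
      then have "cos \<bar>2 * pi * \<bar>t\<bar> * \<mu>\<bar> = cos \<bar>2 * pi * (of_int (h i) + 1/2 + e)\<bar>"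
        by (rule arg_cong)
      then have "cos (2 * pi * \<bar>t\<bar> * \<mu>) = cos (2 * pi * (of_int (h i) + 1/2 + e))"
        by (simp only: cos_abs_real)
      also have "\<dots> \<le> -1 + \<delta>"
        using \<open>\<bar>e\<bar> < \<epsilon>\<close> by (intro cos_near_odd_multiple_pi) (simp_all add: \<epsilon>_def)
      finally show "cos (2 * pi * \<bar>t\<bar> * \<mu>) \<le> -1 + \<delta>" .
    qed
  qed (auto intro: exI[of _ 1])
qed

theorem corollary18:
  fixes A :: "real^'n^'n" and u :: 'n
  assumes "weighted_graph A" and "graph_connected A" and "graph_bipartite A"
    and "0 \<in> eig_support A u"
    and "eproj A 0 $ u $ u < 1/2"
    and "card {\<mu>\<in>eig_support A u. \<mu> > 0} = 1
         \<or> (card {\<mu>\<in>eig_support A u. \<mu> > 0} \<ge> 2 \<and>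
             ((\<exists>m. \<forall>\<mu>\<in>{\<mu>\<in>eig_support A u. \<mu> > 0}.
                  \<exists>k::int. \<mu> = of_int k \<and> multiplicity 2 k = m)
              \<or> (\<forall>c. (\<forall>\<mu>\<in>{\<mu>\<in>eig_support A u. \<mu> > 0}. c \<mu> \<in> \<rat>) \<longrightarrow>
                    (\<Sum>\<mu>\<in>{\<mu>\<in>eig_support A u. \<mu> > 0}. c \<mu> * \<mu>) = 0 \<longrightarrow>
                    (\<forall>\<mu>\<in>{\<mu>\<in>eig_support A u. \<mu> > 0}. c \<mu> = 0))))"
  shows "\<not> sedentary A u"
proof -
  have sym: "transpose A = A"
    using assms(1) by (simp add: weighted_graph_def transpose_def vec_eq_iff)
  let ?F = "{\<mu>\<in>eig_support A u. \<mu> > 0}"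
  have "approx_antiphase ?F"
    using assms(6)
  proof (elim disjE conjE exE)
    assume "card ?F = 1"
    then obtain \<mu> where "?F = {\<mu>}" by (rule card_1_singletonE)
    moreover have "\<mu> \<noteq> 0" using \<open>?F = {\<mu>}\<close> by auto
    ultimately show ?thesis using approx_antiphase_singleton by simp
  next
    fix m assume "\<forall>\<mu>\<in>?F. \<exists>k::int. \<mu> = of_int k \<and> multiplicity 2 k = m"
    then show ?thesis by (intro approx_antiphase_same_multiplicity_2) simp_all
  next
    assume "\<forall>c. (\<forall>\<mu>\<in>?F. c \<mu> \<in> \<rat>) \<longrightarrow> (\<Sum>\<mu>\<in>?F. c \<mu> * \<mu>) = 0 \<longrightarrow> (\<forall>\<mu>\<in>?F. c \<mu> = 0)"
    then show ?thesis
      using finite_eig_support[OF sym] by (intro approx_antiphase_rat_independent) simp_all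
  qed
  then show ?thesis by (rule not_sedentary_if_approx_antiphase[OF sym assms(3-5)])
qed

end
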